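(* Let $d>0$, let $\mathcal{S}$ be the 4-PAM constellation labeled by the Gray labeling $\boldsymbol{q}=[1,0,2,3]$ or $\boldsymbol{q}=[2,0,1,3]$, and let $\mathcal{B}\subset\{0,1\}^{2N}$ be any binary linear code with at least two codewords. Then $\mathsf{L}(\mathcal{B})=0$.
   Context: $\mathcal{S}=\{s_1,s_2,s_3,s_4\}$ with $s_1=-3d$, $s_2=-d$, $s_3=d$, $s_4=3d$. A labeling is a bijection $\Phi_{\mathcal{S}}:\{0,1\}^2\to\mathcal{S}$, described by $\boldsymbol{q}=[q_1,\dots,q_4]$ where $q_i$ is the integer whose two-bit representation (most significant bit first) is $\Phi_{\mathcal{S}}^{-1}(s_i)$. A codeword of $\mathcal{B}$ is written $\boldsymbol{b}=[\boldsymbol{b}[1],\dots,\boldsymbol{b}[N]]$ with $\boldsymbol{b}[k]=[b_1[k],b_2[k]]$, and the CM code is $\mathcal{X}=\{[\Phi_{\mathcal{S}}(\boldsymbol{b}[1]),\dots,\Phi_{\mathcal{S}}(\boldsymbol{b}[N])]:\boldsymbol{b}\in\mathcal{B}\}$. For $\boldsymbol{x},\hat{\boldsymbol{x}}\in\mathcal{S}^N$ and each $k$ with $x[k]\neq\hat{x}[k]$: $\mu^{\mathcal{X}}_k=\sigma^{2,\mathcal{X}}_k=(x[k]-\hat{x}[k])^2/(4d^2)$; $\mu^{\mathcal{B}}_k=\sigma^{2,\mathcal{B}}_k=(x[k]-\hat{x}[k])^2/(4d^2)$ except that if $\{x[k],\hat{x}[k]\}=\{s_1,s_4\}$ then $\mu^{\mathcal{B}}_k=3$,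 $\sigma^{2,\mathcal{B}}_k=1$. Summing over $k$ with $x[k]\neq\hat{x}[k]$, $a^{\mathcal{X}}(\boldsymbol{x},\hat{\boldsymbol{x}})=\sum_k\mu^{\mathcal{X}}_k/\sqrt{\sum_k\sigma^{2,\mathcal{X}}_k}$ and $a^{\mathcal{B}}(\boldsymbol{x},\hat{\boldsymbol{x}})=\sum_k\mu^{\mathcal{B}}_k/\sqrt{\sum_k\sigma^{2,\mathcal{B}}_k}$ (normalized distances of the symbol-wise ML decoder and of the bit-wise max-log decoder under the zero-crossing approximation). The asymptotic loss of the code is $\mathsf{L}(\mathcal{B})=20\log_{10}\Big(\min_{\boldsymbol{x}\neq\hat{\boldsymbol{x}}\in\mathcal{X}}a^{\mathcal{X}}(\boldsymbol{x},\hat{\boldsymbol{x}})\big/\min_{\boldsymbol{x}\neq\hat{\boldsymbol{x}}\in\mathcal{X}}a^{\mathcal{B}}(\boldsymbol{x},\hat{\boldsymbol{x}})\Big)$ dB. *)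

theory Defs
  imports Complex_Main
begin

text \<open>4-PAM constellation: pam_sym d i is s_{i+1} for i = 0..3, i.e. -3d, -d, d, 3d.\<close>
definition pam_sym :: "real \<Rightarrow> nat \<Rightarrow> real" where
  "pam_sym d i = (2 * real i - 3) * d"

definition bitval :: "bool \<times> bool \<Rightarrow> nat" where
  "bitval b = 2 * (if fst b then 1 else 0) + (if snd b then 1 else 0)"

text \<open>Labeling Phi_S given by q = [q_1,...,q_4] (0-based list): Phi(b) = s_i iff q_i = bitval b.\<close>
definition Phi :: "nat list \<Rightarrow> real \<Rightarrow> bool \<times> bool \<Rightarrow> real" where
  "Phi q d b = (\<Sum>i<4. if q ! i = bitval b then pam_sym d i else 0)"

text \<open>Codewords of a binary code of length 2N as lists of N bit pairs b[k] = (b_1[k], b_2[k]).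
  A binary linear code: a subspace of GF(2)^{2N} (contains 0, closed under addition).\<close>
definition binary_linear_code :: "nat \<Rightarrow> (bool \<times> bool) list set \<Rightarrow> bool" where
  "binary_linear_code N B \<longleftrightarrow>
     B \<subseteq> {b. length b = N} \<and> replicate N (False, False) \<in> B \<and>
     (\<forall>b\<in>B. \<forall>c\<in>B. map2 (\<lambda>u v. (fst u \<noteq> fst v, snd u \<noteq> snd v)) b c \<in> B)"

definition CM_code :: "nat list \<Rightarrow> real \<Rightarrow> (bool \<times> bool) list set \<Rightarrow> real list set" where
  "CM_code q d B = (\<lambda>b. map (Phi q d) b) ` B"

definition mu_X :: "real \<Rightarrow> real \<Rightarrow> real \<Rightarrow> real" where
  "mu_X d u v = (u - v)^2 / (4 * d^2)"

definition sigma2_X :: "real \<Rightarrow> real \<Rightarrow> real \<Rightarrow> real" where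
  "sigma2_X d u v = (u - v)^2 / (4 * d^2)"

definition mu_B :: "real \<Rightarrow> real \<Rightarrow> real \<Rightarrow> real" where
  "mu_B d u v = (if {u, v} = {pam_sym d 0, pam_sym d 3} then 3 else (u - v)^2 / (4 * d^2))"

definition sigma2_B :: "real \<Rightarrow> real \<Rightarrow> real \<Rightarrow> real" where
  "sigma2_B d u v = (if {u, v} = {pam_sym d 0, pam_sym d 3} then 1 else (u - v)^2 / (4 * d^2))"

definition diff_pos :: "real list \<Rightarrow> real list \<Rightarrow> nat set" where
  "diff_pos x xh = {k. k < length x \<and> x ! k \<noteq> xh ! k}"

definition a_X :: "real \<Rightarrow> real list \<Rightarrow> real list \<Rightarrow> real" where
  "a_X d x xh = (\<Sum>k\<in>diff_pos x xh. mu_X d (x!k) (xh!k)) /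
                 sqrt (\<Sum>k\<in>diff_pos x xh. sigma2_X d (x!k) (xh!k))"

definition a_B :: "real \<Rightarrow> real list \<Rightarrow> real list \<Rightarrow> real" where
  "a_B d x xh = (\<Sum>k\<in>diff_pos x xh. mu_B d (x!k) (xh!k)) /
                 sqrt (\<Sum>k\<in>diff_pos x xh. sigma2_B d (x!k) (xh!k))"

definition asym_loss :: "nat list \<Rightarrow> real \<Rightarrow> (bool \<times> bool) list set \<Rightarrow> real" where
  "asym_loss q d B =
     (let X = CM_code q d B in
      20 * log 10 (Min {a_X d x xh | x xh. x \<in> X \<and> xh \<in> X \<and> x \<noteq> xh} /
                   Min {a_B d x xh | x xh. x \<in> X \<and> xh \<in> X \<and> x \<noteq> xh}))"

end

theory Submission
  imports Defs
begin

text \<open>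
  For two codewords let \<open>S\<close> be the sum of the bit-wise variances over the positions where
  they differ, and \<open>I\<close> the number of those positions carrying the outer pair \<open>{s\<^sub>1, s\<^sub>4}\<close>.
  Then \<open>a\<^sup>X = \<surd>(S + 8I)\<close> and \<open>a\<^sup>B = (S + 2I) / \<surd>S\<close>, and \<open>0 \<le> I \<le> S\<close> gives
  \<open>\<surd>S \<le> a\<^sup>B \<le> a\<^sup>X\<close>, so the bit-wise distance never exceeds the symbol-wise one.
  Conversely, under a Gray labeling the outer pair differs in one bit only, and the bit-wise
  variance of two labels is the symbol-wise variance between the label 00 and their XOR.
  By linearity the images of \<open>0\<close> and \<open>b \<oplus> c\<close> are again codewords of the CM code, and their
  symbol-wise distance is \<open>\<surd>S\<close>. Hence both minima coincide and the loss is \<open>20 log\<^sub>1\<^sub>0 1 = 0\<close>.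
\<close>

definition outer_pair :: "real \<Rightarrow> real \<Rightarrow> real \<Rightarrow> real" where
  "outer_pair d u v = of_bool ({u, v} = {pam_sym d 0, pam_sym d 3})"

lemma outer_pair_dist:
  assumes "{u, v} = {pam_sym d 0, pam_sym d 3}"
  shows "(u - v)\<^sup>2 = 36 * d\<^sup>2"
  using assms by (auto simp: doubleton_eq_iff pam_sym_def power2_eq_square algebra_simps)

lemma mu_B_eq:
  "mu_B d u v = sigma2_B d u v + 2 * outer_pair d u v"
  by (simp add: mu_B_def sigma2_B_def outer_pair_def)

lemma sigma2_X_eq:
  assumes "d \<noteq> 0"
  shows "sigma2_X d u v = sigma2_B d u v + 8 * outer_pair d u v"
  using assms outer_pair_dist[of u v d]
  by (simp add: sigma2_X_def sigma2_B_def outer_pair_def)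

lemma sigma2_X_nonneg: "0 \<le> sigma2_X d u v"
  by (simp add: sigma2_X_def)

lemma outer_pair_nonneg: "0 \<le> outer_pair d u v"
  by (simp add: outer_pair_def)

lemma outer_pair_le_sigma2_B: "outer_pair d u v \<le> sigma2_B d u v"
  by (simp add: outer_pair_def sigma2_B_def)

lemma sigma2_B_nonneg: "0 \<le> sigma2_B d u v"
  by (simp add: sigma2_B_def)

lemma shifted_ratio_le_sqrt:
  fixes S I :: real
  assumes "0 \<le> I" "I \<le> S"
  shows "(S + 2 * I) / sqrt S \<le> sqrt (S + 8 * I)"
proof (cases "S = 0")
  case True
  then show ?thesis using assms by simp
next
  case False
  with assms have "S > 0" by simp
  have "(S + 2 * I)\<^sup>2 \<le> S * (S + 8 * I)"
    using assms by (simp add: power2_eq_square algebra_simps mult_mono)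
  then have "S + 2 * I \<le> sqrt (S * (S + 8 * I))"
    by (rule real_le_rsqrt)
  then have "S + 2 * I \<le> sqrt S * sqrt (S + 8 * I)"
    by (simp add: real_sqrt_mult)
  then show ?thesis
    using \<open>S > 0\<close> by (simp add: divide_le_eq mult.commute)
qed

lemma diff_pos_self: "diff_pos x x = {}"
  by (simp add: diff_pos_def)

lemma diff_pos_empty_iff:
  assumes "length x = length xh"
  shows "diff_pos x xh = {} \<longleftrightarrow> x = xh"
  using assms by (auto simp: diff_pos_def intro: nth_equalityI)

lemma a_X_eq_sqrt:
  "a_X d x xh = sqrt (\<Sum>k\<in>diff_pos x xh. sigma2_X d (x!k) (xh!k))"
  unfolding a_X_def mu_X_def sigma2_X_def[symmetric]
  by (rule real_div_sqrt) (simp add: sum_nonneg sigma2_X_nonneg)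

lemma sqrt_sum_sigma2_B_le_a_B:
  "sqrt (\<Sum>k\<in>diff_pos x xh. sigma2_B d (x!k) (xh!k)) \<le> a_B d x xh"
proof -
  let ?S = "\<Sum>k\<in>diff_pos x xh. sigma2_B d (x!k) (xh!k)"
  have "?S \<le> (\<Sum>k\<in>diff_pos x xh. mu_B d (x!k) (xh!k))"
    by (intro sum_mono) (simp add: mu_B_eq outer_pair_nonneg)
  then have "?S / sqrt ?S \<le> a_B d x xh"
    unfolding a_B_def by (rule divide_right_mono) (simp add: sum_nonneg sigma2_B_nonneg)
  moreover have "?S / sqrt ?S = sqrt ?S"
    by (simp add: real_div_sqrt sum_nonneg sigma2_B_nonneg)
  ultimately show ?thesis by simp
qed

lemma a_B_le_a_X:
  assumes "d \<noteq> 0"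
  shows "a_B d x xh \<le> a_X d x xh"
proof -
  define D where "D = diff_pos x xh"
  define S where "S = (\<Sum>k\<in>D. sigma2_B d (x!k) (xh!k))"
  define I where "I = (\<Sum>k\<in>D. outer_pair d (x!k) (xh!k))"
  have "a_B d x xh = (S + 2 * I) / sqrt S"
    by (simp add: a_B_def mu_B_eq sum.distrib sum_distrib_left S_def I_def D_def)
  moreover have "a_X d x xh = sqrt (S + 8 * I)"
    using assms
    by (simp add: a_X_eq_sqrt sigma2_X_eq sum.distrib sum_distrib_left S_def I_def D_def)
  moreover have "0 \<le> I" "I \<le> S"
    unfolding S_def I_def
    by (simp_all add: sum_nonneg sum_mono outer_pair_nonneg outer_pair_le_sigma2_B)
  ultimately show ?thesis by (simp add: shifted_ratio_le_sqrt)
qed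

definition pair_xor :: "bool \<times> bool \<Rightarrow> bool \<times> bool \<Rightarrow> bool \<times> bool" where
  "pair_xor u v = (fst u \<noteq> fst v, snd u \<noteq> snd v)"

definition gray_labeling :: "nat list \<Rightarrow> bool" where
  "gray_labeling q \<longleftrightarrow> q = [1, 0, 2, 3] \<or> q = [2, 0, 1, 3]"

lemma bool_pair_exhaust:
  obtains "b = (False, False)" | "b = (False, True)" | "b = (True, False)" | "b = (True, True)"
  by (cases b) auto

lemma pair_xor_eq_zero_iff:
  "pair_xor u v = (False, False) \<longleftrightarrow> u = v"
  "(False, False) = pair_xor u v \<longleftrightarrow> u = v"
  by (auto simp: pair_xor_def prod_eq_iff)

lemma Phi_gray_cases:
  assumes "gray_labeling q"
  obtains "Phi q d (False, False) = -d" "Phi q d (True, True) = 3 * d"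
      "Phi q d (False, True) = -3 * d" "Phi q d (True, False) = d"
    | "Phi q d (False, False) = -d" "Phi q d (True, True) = 3 * d"
      "Phi q d (False, True) = d" "Phi q d (True, False) = -3 * d"
  using assms
  by (auto simp: gray_labeling_def Phi_def bitval_def pam_sym_def lessThan_Suc numeral_eq_Suc)

lemma Phi_gray_inj:
  assumes "gray_labeling q" "d > 0"
  shows "Phi q d b = Phi q d c \<longleftrightarrow> b = c"
  using assms(2)
  by (cases rule: Phi_gray_cases[OF assms(1), of d];
      cases b rule: bool_pair_exhaust; cases c rule: bool_pair_exhaust)
     (auto split: if_splits)

lemma sigma2_B_gray_xor:
  assumes "gray_labeling q" "d > 0"
  shows "sigma2_B d (Phi q d b) (Phi q d c)
           = sigma2_X d (Phi q d (False, False)) (Phi q d (pair_xor b c))"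
  using assms(2)
  by (cases rule: Phi_gray_cases[OF assms(1), of d];
      cases b rule: bool_pair_exhaust; cases c rule: bool_pair_exhaust)
     (auto simp: sigma2_B_def sigma2_X_def pair_xor_def pam_sym_def doubleton_eq_iff
        power2_eq_square field_simps)

lemma a_X_xor_le_a_B:
  assumes "gray_labeling q" "d > 0" "length b = length c"
  defines "x0 \<equiv> map (Phi q d) (replicate (length b) (False, False))"
    and "xe \<equiv> map (Phi q d) (map2 pair_xor b c)"
  shows "diff_pos x0 xe = diff_pos (map (Phi q d) b) (map (Phi q d) c)"
    and "a_X d x0 xe \<le> a_B d (map (Phi q d) b) (map (Phi q d) c)"
proof -
  let ?x = "map (Phi q d) b" and ?xh = "map (Phi q d) c"
  show D: "diff_pos x0 xe = diff_pos ?x ?xh"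
    using assms(3)
    by (auto simp: diff_pos_def x0_def xe_def Phi_gray_inj[OF assms(1,2)] pair_xor_eq_zero_iff)
  have "(\<Sum>k\<in>diff_pos x0 xe. sigma2_X d (x0!k) (xe!k))
          = (\<Sum>k\<in>diff_pos ?x ?xh. sigma2_B d (?x!k) (?xh!k))"
    unfolding D using assms(3)
    by (intro sum.cong) (auto simp: diff_pos_def x0_def xe_def sigma2_B_gray_xor[OF assms(1,2)])
  then show "a_X d x0 xe \<le> a_B d ?x ?xh"
    using sqrt_sum_sigma2_B_le_a_B by (simp add: a_X_eq_sqrt)
qed

lemma CM_code_pair_a_X_le_a_B:
  assumes "gray_labeling q" "d > 0" "binary_linear_code N B"
    and "b \<in> B" "c \<in> B" "map (Phi q d) b \<noteq> map (Phi q d) c"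
  shows "\<exists>x0\<in>CM_code q d B. \<exists>xe\<in>CM_code q d B.
           x0 \<noteq> xe \<and> a_X d x0 xe \<le> a_B d (map (Phi q d) b) (map (Phi q d) c)"
proof -
  from assms(3-5) have len: "length b = N" "length c = N"
    and code: "replicate N (False, False) \<in> B" "map2 pair_xor b c \<in> B"
    by (auto simp: binary_linear_code_def pair_xor_def)
  let ?x0 = "map (Phi q d) (replicate N (False, False))"
  let ?xe = "map (Phi q d) (map2 pair_xor b c)"
  have "length b = length c" using len by simp
  note pair = a_X_xor_le_a_B[OF assms(1,2) this, unfolded len(1)]
  have "diff_pos (map (Phi q d) b) (map (Phi q d) c) \<noteq> {}"
    using assms(6) len by (simp add: diff_pos_empty_iff)
  then have "diff_pos ?x0 ?xe \<noteq> {}"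
    by (subst pair(1))
  then have "?x0 \<noteq> ?xe"
    by (metis diff_pos_self)
  moreover have "?x0 \<in> CM_code q d B" "?xe \<in> CM_code q d B"
    using code unfolding CM_code_def by blast+
  ultimately show ?thesis
    using pair(2) by blast
qed

lemma Min_image_eq_if_dominated:
  fixes f g :: "'a \<Rightarrow> 'b::linorder"
  assumes "finite A"
    and "\<And>a. a \<in> A \<Longrightarrow> g a \<le> f a"
    and "\<And>a. a \<in> A \<Longrightarrow> \<exists>a'\<in>A. f a' \<le> g a"
  shows "Min (f ` A) = Min (g ` A)"
proof (cases "A = {}")
  case False
  have "Min (g ` A) \<in> g ` A"
    using assms(1) False by (intro Min_in) auto
  then obtain a where a: "a \<in> A" "Min (g ` A) = g a" by auto
  obtain a' where a': "a' \<in> A" "f a' \<le> g a" using assms(3)[OF a(1)] by blast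
  have "Min (f ` A) \<le> Min (g ` A)"
    using a a' assms(1) by (metis Min_le finite_imageI image_eqI order_trans)
  moreover have "Min (g ` A) \<le> Min (f ` A)"
  proof (rule Min.boundedI)
    show "Min (g ` A) \<le> y" if "y \<in> f ` A" for y
      using that assms(1,2) by (metis Min_le finite_imageI image_iff order_trans)
  qed (use assms(1) False in auto)
  ultimately show ?thesis by simp
qed simp

theorem theorem2:
  fixes d :: real and N :: nat and q :: "nat list" and B :: "(bool \<times> bool) list set"
  assumes "d > 0"
    and "q = [1, 0, 2, 3] \<or> q = [2, 0, 1, 3]"
    and "binary_linear_code N B"
    and "card B \<ge> 2"
  shows "asym_loss q d B = 0"
proof -
  have gray: "gray_labeling q" using assms(2) by (simp add: gray_labeling_def)
  define X where "X = CM_code q d B"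
  define P where "P = {(x, xh). x \<in> X \<and> xh \<in> X \<and> x \<noteq> xh}"
  have "finite B" using assms(4) card.infinite by fastforce
  then have "finite X" by (simp add: X_def CM_code_def)
  then have "finite P" by (intro finite_subset[of P "X \<times> X"]) (auto simp: P_def)
  have "\<exists>p'\<in>P. case_prod (a_X d) p' \<le> case_prod (a_B d) p" if "p \<in> P" for p
    using that CM_code_pair_a_X_le_a_B[OF gray assms(1,3)]
    by (fastforce simp: P_def X_def CM_code_def)
  then have "Min (case_prod (a_X d) ` P) = Min (case_prod (a_B d) ` P)"
    using \<open>finite P\<close> a_B_le_a_X assms(1)
    by (intro Min_image_eq_if_dominated) auto
  moreover have "{a_X d x xh | x xh. x \<in> X \<and> xh \<in> X \<and> x \<noteq> xh} = case_prod (a_X d) ` P"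
    and "{a_B d x xh | x xh. x \<in> X \<and> xh \<in> X \<and> x \<noteq> xh} = case_prod (a_B d) ` P"
    by (auto simp: P_def)
  ultimately show ?thesis
    unfolding asym_loss_def Let_def X_def[symmetric]
    by (cases "Min (case_prod (a_B d) ` P) = 0") (simp_all add: log_def)
qed

end
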